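(* Let $x\ge2$, let $k=k(x)\ge2$, and let $m$ be a uniformly random integer in $[1,x]$. Then \[ \mathbb{P}\big(\exists\text{ prime }p>k:\ v_p(m)=1\big)=1-O\Big(\frac{\log k}{\log x}+\frac1k\Big), \] with an absolute implied constant.
   Context: $v_p$ denotes the $p$-adic valuation on the integers. *)

theory Defs
  imports Complex_Main "HOL-Computational_Algebra.Primes"
begin

definition prob_large_simple_prime :: "real \<Rightarrow> real \<Rightarrow> real" where
  "prob_large_simple_prime x k =
     real (card {m \<in> {1..nat \<lfloor>x\<rfloor>}. \<exists>p::nat. prime p \<and> real p > k \<and> multiplicity p m = 1})
     / real (card {1..nat \<lfloor>x\<rfloor>})"

end

theory Submission
  imports Defs "HOL-Number_Theory.Prime_Powers" "HOL-Analysis.Summation_Tests"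
begin

text \<open>
  Call \<open>m\<close> exceptional if no prime \<open>p > k\<close> divides it exactly once. Every prime \<open>p > k\<close>
  dividing an exceptional \<open>m\<close> then divides it at least squared, so in
  \<open>ln m = (\<Sum>d | d dvd m. \<Lambda> d)\<close> the primes above \<open>k\<close> are dominated by the prime powers
  \<open>p ^ a\<close> with \<open>a \<ge> 2\<close>: \<open>ln m\<close> is at most the sum over \<open>d dvd m\<close> of \<open>\<Lambda> d\<close> for primes
  \<open>d \<le> k\<close> plus twice \<open>\<Lambda> d\<close> for higher prime powers \<open>d\<close>. Summing over \<open>m \<le> N\<close> and
  swapping the sums, Chebyshev's estimate \<open>(\<Sum>p \<le> k. ln p / p) \<le> 2 ln k\<close> and the convergence
  of \<open>\<Sum>\<^sub>p\<Sum>\<^sub>a\<^sub>\<ge>\<^sub>2 ln p / p ^ a\<close> give \<open>\<Sum> ln m \<le> N (2 ln k + O(1))\<close> over the exceptional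
  \<open>m \<le> N\<close>. All but \<open>\<surd>N\<close> of them exceed \<open>\<surd>N\<close>, so there are \<open>O(N ln k / ln N)\<close> of them.
\<close>

lemma real_div_minus_one_le: "real n / real d - 1 \<le> real (n div d)"
proof -
  have "real n / real d - 1 < real_of_int \<lfloor>real n / real d\<rfloor>"
    by (rule real_of_int_floor_gt_diff_one)
  then show ?thesis by (simp add: floor_divide_of_nat_eq)
qed

lemma ln_le_two_sqrt:
  assumes "0 < x"
  shows "ln x \<le> 2 * sqrt x"
proof -
  have "ln x = 2 * ln (sqrt x)" using assms by (simp add: ln_sqrt)
  also have "\<dots> \<le> 2 * (sqrt x - 1)" using assms by (intro mult_left_mono ln_le_minus_one) auto
  finally show ?thesis by simp
qed

lemma sqrt_le_two_mult_div_ln: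
  fixes x :: real
  assumes "1 < x"
  shows "sqrt x \<le> 2 * x / ln x"
proof -
  have "sqrt x * ln x \<le> sqrt x * (2 * sqrt x)"
    using ln_le_two_sqrt[of x] assms by (intro mult_left_mono) auto
  also have "\<dots> = 2 * x" using assms by simp
  finally show ?thesis using assms by (simp add: field_simps)
qed

lemma ln_div_square_le:
  fixes x :: real
  assumes "0 < x"
  shows "ln x / x\<^sup>2 \<le> 2 * x powr (-3/2)"
proof -
  have "x powr (-3/2) * x\<^sup>2 = x powr (-3/2) * x powr 2"
    using assms by (simp add: powr_numeral)
  also have "\<dots> = x powr (1/2)" by (simp add: powr_add[symmetric])
  also have "\<dots> = sqrt x" using assms by (simp add: powr_half_sqrt)
  finally have "2 * x powr (-3/2) = 2 * sqrt x / x\<^sup>2" using assms by (simp add: field_simps)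
  then show ?thesis
    using ln_le_two_sqrt[OF assms] assms by (simp add: divide_right_mono)
qed

lemma ln_le_two_ln_nat_floor:
  assumes "2 \<le> x"
  shows "ln x \<le> 2 * ln (real (nat \<lfloor>x\<rfloor>))"
proof -
  define N where "N = nat \<lfloor>x\<rfloor>"
  have "2 \<le> N" using assms by (simp add: N_def le_nat_floor)
  have "x < real N + 1" using assms unfolding N_def by linarith
  also have "\<dots> \<le> real N * real N"
  proof -
    have "N + 1 \<le> N * N" using mult_le_mono1[OF \<open>2 \<le> N\<close>, of N] \<open>2 \<le> N\<close> by linarith
    then show ?thesis by (metis of_nat_1 of_nat_add of_nat_le_iff of_nat_mult)
  qed
  finally have "ln x \<le> ln (real N * real N)" using assms by simp
  also have "\<dots> = 2 * ln (real N)" using \<open>2 \<le> N\<close> by (simp add: ln_mult)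
  finally show ?thesis by (simp add: N_def)
qed

lemma sum_inverse_power_from_2_le:
  fixes q :: real
  assumes "2 \<le> q"
  shows "(\<Sum>a=2..N. (1 / q) ^ a) \<le> 2 / q\<^sup>2"
proof -
  define r where "r = 1 / q"
  have r: "0 \<le> r" "r \<le> 1/2" using assms by (auto simp: r_def field_simps)
  have "(\<Sum>a=2..N. r ^ a) \<le> r\<^sup>2 / (1 - r)"
  proof (cases "N < 2")
    case False
    then have "(\<Sum>a=2..N. r ^ a) = (r\<^sup>2 - r ^ Suc N) / (1 - r)"
      using r by (subst sum_gp) auto
    also have "\<dots> \<le> r\<^sup>2 / (1 - r)" using r by (intro divide_right_mono) auto
    finally show ?thesis .
  qed (use r in simp)
  also have "\<dots> = r\<^sup>2 * (1 / (1 - r))" by simp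
  also have "\<dots> \<le> r\<^sup>2 * 2" using r by (intro mult_left_mono) (auto simp: field_simps)
  finally show ?thesis by (simp add: r_def power_divide)
qed

lemma exponent_less_power:
  fixes p :: nat
  assumes "2 \<le> p"
  shows "a < p ^ a"
proof -
  have "a < 2 ^ a" by (rule less_exp)
  also have "\<dots> \<le> p ^ a" using assms by (simp add: power_mono)
  finally show ?thesis .
qed

lemma card_le_sqrt_add_sum_ln:
  fixes x :: real
  assumes "finite B" "0 \<notin> B" "1 < x"
  shows "real (card B) \<le> sqrt x + 2 * (\<Sum>m\<in>B. ln (real m)) / ln x"
proof -
  define T where "T = {m\<in>B. real m \<le> sqrt x}"
  define U where "U = {m\<in>B. sqrt x < real m}"
  have "card B = card T + card U"
    using assms(1)
    by (subst card_Un_disjoint[symmetric]) (auto simp: T_def U_def intro: arg_cong[where f = card])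
  have "T \<subseteq> {1..nat \<lfloor>sqrt x\<rfloor>}"
    using assms(2) by (auto simp: T_def Suc_le_eq intro: Nat.gr0I le_nat_floor)
  then have "real (card T) \<le> real (nat \<lfloor>sqrt x\<rfloor>)"
    by (metis card_atLeastAtMost card_mono diff_Suc_1 finite_atLeastAtMost of_nat_mono)
  also have "\<dots> \<le> sqrt x" using assms(3) by (simp add: of_nat_floor)
  finally have card_T: "real (card T) \<le> sqrt x" .
  have ln_nonneg: "0 \<le> ln (real m)" if "m \<in> B" for m
    using that assms(2) by (cases m) auto
  have "real (card U) * (ln x / 2) = (\<Sum>m\<in>U. ln (sqrt x))" using assms(3) by (simp add: ln_sqrt)
  also have "\<dots> \<le> (\<Sum>m\<in>U. ln (real m))" using assms(3) by (intro sum_mono ln_mono) (auto simp: U_def)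
  also have "\<dots> \<le> (\<Sum>m\<in>B. ln (real m))"
    using assms(1) ln_nonneg by (intro sum_mono2) (auto simp: U_def)
  finally have "real (card U) \<le> 2 * (\<Sum>m\<in>B. ln (real m)) / ln x"
    using assms(3) by (simp add: field_simps)
  with card_T \<open>card B = card T + card U\<close> show ?thesis by simp
qed

lemma card_multiples_atLeastAtMost:
  assumes "d > 0"
  shows "card {m \<in> {1..n}. d dvd m} = n div d"
proof -
  have "{m \<in> {1..n}. d dvd m} = (\<lambda>j. d * j) ` {1..n div d}"
  proof (intro set_eqI iffI)
    fix m assume "m \<in> {m \<in> {1..n}. d dvd m}"
    then obtain j where j: "m = d * j" "1 \<le> m" "m \<le> n" by auto
    then have "1 \<le> j" by (cases j) auto
    moreover have "j \<le> n div d" using j assms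
      by (metis div_le_mono nonzero_mult_div_cancel_left not_gr0)
    ultimately show "m \<in> (\<lambda>j. d * j) ` {1..n div d}" using j by auto
  next
    fix m assume "m \<in> (\<lambda>j. d * j) ` {1..n div d}"
    then obtain j where j: "m = d * j" "1 \<le> j" "j \<le> n div d"
      by (metis imageE atLeastAtMost_iff)
    have "d * j \<le> d * (n div d)" using j by simp
    also have "\<dots> \<le> n" by simp
    finally show "m \<in> {m \<in> {1..n}. d dvd m}" using j assms by auto
  qed
  moreover have "inj_on (\<lambda>j. d * j) {1..n div d}" using assms by (auto simp: inj_on_def)
  ultimately show ?thesis by (simp add: card_image)
qed

lemma sum_sum_divisors_eq:
  fixes f :: "nat \<Rightarrow> 'a :: comm_semiring_1"
  shows "(\<Sum>m=1..n. \<Sum>d | d dvd m. f d) = (\<Sum>d=1..n. f d * of_nat (n div d))"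
proof -
  have divisors: "{d. d dvd m} = {d \<in> {1..n}. d dvd m}" if "m \<in> {1..n}" for m
    using that by (auto dest: dvd_imp_le intro: Nat.gr0I)
  have "(\<Sum>m=1..n. \<Sum>d | d dvd m. f d) = (\<Sum>m=1..n. \<Sum>d=1..n. if d dvd m then f d else 0)"
    by (rule sum.cong[OF refl]) (simp only: divisors sum.inter_filter[OF finite_atLeastAtMost])
  also have "\<dots> = (\<Sum>d=1..n. \<Sum>m=1..n. if d dvd m then f d else 0)"
    by (rule sum.swap)
  also have "\<dots> = (\<Sum>d=1..n. f d * of_nat (n div d))"
  proof (rule sum.cong[OF refl])
    fix d assume "d \<in> {1..n}"
    then have "card {m \<in> {1..n}. d dvd m} = n div d" by (intro card_multiples_atLeastAtMost) simp
    then show "(\<Sum>m=1..n. if d dvd m then f d else 0) = f d * of_nat (n div d)"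
      by (simp only: sum.inter_filter[OF finite_atLeastAtMost, symmetric] sum_constant mult.commute)
  qed
  finally show ?thesis .
qed

lemma sum_ln_eq_sum_mangoldt: "(\<Sum>m=1..n. ln (real m)) = (\<Sum>d=1..n. mangoldt d * real (n div d))"
proof -
  have "(\<Sum>m=1..n. ln (real m)) = (\<Sum>m=1..n. \<Sum>d | d dvd m. (mangoldt d :: real))"
    by (intro sum.cong refl) (simp add: mangoldt_sum)
  also have "\<dots> = (\<Sum>d=1..n. mangoldt d * real (n div d))" by (rule sum_sum_divisors_eq)
  finally show ?thesis .
qed

definition small_prime_ln :: "real \<Rightarrow> nat \<Rightarrow> real" where
  "small_prime_ln k d = (if prime d \<and> real d \<le> k then ln (real d) else 0)"

definition large_prime_ln :: "real \<Rightarrow> nat \<Rightarrow> real" where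
  "large_prime_ln k d = (if prime d \<and> real d > k then ln (real d) else 0)"

definition higher_power_mangoldt :: "nat \<Rightarrow> real" where
  "higher_power_mangoldt d = (if prime d then 0 else mangoldt d)"

lemma small_prime_ln_nonneg: "0 \<le> small_prime_ln k d"
  by (auto simp: small_prime_ln_def dest: prime_gt_0_nat)

lemma higher_power_mangoldt_nonneg: "0 \<le> higher_power_mangoldt d"
  by (simp add: higher_power_mangoldt_def mangoldt_nonneg)

lemma mangoldt_eq_small_large_higher_power:
  "(mangoldt d :: real) = small_prime_ln k d + large_prime_ln k d + higher_power_mangoldt d"
  by (auto simp: small_prime_ln_def large_prime_ln_def higher_power_mangoldt_def)

lemma higher_power_mangoldt_prime_power:
  assumes "prime p" "2 \<le> a"
  shows "higher_power_mangoldt (p ^ a) = ln (real p)"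
  using assms by (simp add: higher_power_mangoldt_def prime_power_iff)

lemma higher_power_mangoldt_nonzeroD:
  assumes "higher_power_mangoldt d \<noteq> 0" "d \<le> N"
  obtains p a where "prime p" "p \<le> N" "2 \<le> a" "a \<le> N" "d = p ^ a"
proof -
  have "primepow d" "\<not> prime d"
    using assms(1) by (auto simp: higher_power_mangoldt_def mangoldt_def split: if_splits)
  then obtain p a where pa: "prime p" "0 < a" "d = p ^ a" by (auto simp: primepow_def)
  then have "2 \<le> p" "a \<noteq> 1" using \<open>\<not> prime d\<close> prime_ge_2_nat by auto
  then have "p \<le> d" "a \<le> d" using pa exponent_less_power[of p a] by (auto simp: self_le_power)
  then show thesis using pa \<open>a \<noteq> 1\<close> assms(2) by (intro that[of p a]) auto
qed

text \<open>Chebyshev: \<open>ln n! = (\<Sum>d\<le>n. \<Lambda> d * (n div d))\<close> is at least \<open>(\<Sum>p\<le>n. ln p * (n / p - 1))\<close>.\<close>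

lemma sum_small_prime_ln_div_le_nat:
  assumes "1 \<le> n"
  shows "(\<Sum>d=1..n. small_prime_ln (real n) d / real d) \<le> 2 * ln (real n)"
proof -
  let ?S = "\<Sum>d=1..n. small_prime_ln (real n) d / real d"
  have theta: "(\<Sum>d=1..n. small_prime_ln (real n) d) \<le> real n * ln (real n)"
    using sum_mono[of "{1..n}" "small_prime_ln (real n)" "\<lambda>_. ln (real n)"]
    by (auto simp: small_prime_ln_def)
  have "real n * ?S - real n * ln (real n)
      \<le> (\<Sum>d=1..n. small_prime_ln (real n) d * (real n / real d - 1))"
    using theta by (simp add: algebra_simps sum_subtractf sum_distrib_left sum_divide_distrib)
  also have "\<dots> \<le> (\<Sum>d=1..n. mangoldt d * real (n div d))"
  proof (rule sum_mono)
    fix d assume "d \<in> {1..n}"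
    then show "small_prime_ln (real n) d * (real n / real d - 1) \<le> mangoldt d * real (n div d)"
      using real_div_minus_one_le[of n d]
      by (auto simp: small_prime_ln_def mangoldt_nonneg intro: mult_left_mono)
  qed
  also have "\<dots> = (\<Sum>m=1..n. ln (real m))" by (rule sum_ln_eq_sum_mangoldt[symmetric])
  also have "\<dots> \<le> real n * ln (real n)"
    using sum_mono[of "{1..n}" "\<lambda>m. ln (real m)" "\<lambda>_. ln (real n)"] by auto
  finally have "real n * ?S \<le> real n * (2 * ln (real n))" by simp
  then show ?thesis using assms by simp
qed

lemma sum_small_prime_ln_div_le:
  assumes "1 \<le> k"
  shows "(\<Sum>d=1..N. small_prime_ln k d / real d) \<le> 2 * ln k"
proof -
  define K where "K = nat \<lfloor>k\<rfloor>"
  have le_K: "real d \<le> k \<longleftrightarrow> d \<le> K" for d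
    unfolding K_def using assms by (simp add: le_nat_iff le_floor_iff)
  have K: "1 \<le> K" using le_K[of 1] assms by simp
  have "(\<Sum>d=1..N. small_prime_ln k d / real d) = (\<Sum>d\<in>{1..N} \<inter> {1..K}. small_prime_ln K d / real d)"
    by (rule sum.mono_neutral_cong_right) (auto simp: small_prime_ln_def le_K)
  also have "\<dots> \<le> (\<Sum>d=1..K. small_prime_ln K d / real d)"
    by (rule sum_mono2) (auto simp: small_prime_ln_nonneg)
  also have "\<dots> \<le> 2 * ln (real K)" by (rule sum_small_prime_ln_div_le_nat[OF K])
  also have "\<dots> \<le> 2 * ln k" using le_K[of K] K by simp
  finally show ?thesis .
qed

lemma sum_higher_power_mangoldt_div_le:
  "(\<Sum>d=1..N. higher_power_mangoldt d / real d) \<le> (\<Sum>p | prime p \<and> p \<le> N. 2 * ln (real p) / real p ^ 2)"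
proof -
  let ?f = "\<lambda>d. higher_power_mangoldt d / real d"
  define P where "P = {p. prime p \<and> p \<le> N}"
  have fin_P: "finite P" unfolding P_def by simp
  have f_nonneg: "0 \<le> ?f d" for d using higher_power_mangoldt_nonneg by simp
  have support: "d \<in> (\<lambda>(p, a). p ^ a) ` (P \<times> {2..N})"
    if "d \<in> {1..N}" "?f d \<noteq> 0" for d
  proof -
    have "higher_power_mangoldt d \<noteq> 0" "d \<le> N" using that by auto
    then obtain p a where "prime p" "p \<le> N" "2 \<le> a" "a \<le> N" "d = p ^ a"
      by (rule higher_power_mangoldt_nonzeroD)
    then show ?thesis unfolding P_def by (auto intro!: image_eqI[of _ _ "(p, a)"])
  qed
  have "(\<Sum>d=1..N. ?f d) = (\<Sum>d \<in> {1..N} \<inter> (\<lambda>(p, a). p ^ a) ` (P \<times> {2..N}). ?f d)"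
    by (rule sum.mono_neutral_right) (use support in auto)
  also have "\<dots> \<le> (\<Sum>d \<in> (\<lambda>(p, a). p ^ a) ` (P \<times> {2..N}). ?f d)"
    by (rule sum_mono2) (use fin_P f_nonneg in auto)
  also have "\<dots> \<le> (\<Sum>x \<in> P \<times> {2..N}. (?f \<circ> (\<lambda>(p, a). p ^ a)) x)"
    by (rule sum_image_le) (use fin_P f_nonneg in auto)
  also have "\<dots> = (\<Sum>(p, a) \<in> P \<times> {2..N}. ln (real p) * (1 / real p) ^ a)"
    by (intro sum.cong refl) (auto simp: P_def higher_power_mangoldt_prime_power power_divide)
  also have "\<dots> = (\<Sum>p\<in>P. ln (real p) * (\<Sum>a=2..N. (1 / real p) ^ a))"
    by (simp add: sum.cartesian_product[symmetric] sum_distrib_left)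
  also have "\<dots> \<le> (\<Sum>p\<in>P. 2 * ln (real p) / real p ^ 2)"
  proof (rule sum_mono)
    fix p assume "p \<in> P"
    then have p: "2 \<le> real p" using prime_ge_2_nat by (auto simp: P_def)
    then have "0 \<le> ln (real p)" by simp
    from mult_left_mono[OF sum_inverse_power_from_2_le[OF p] this]
    show "ln (real p) * (\<Sum>a=2..N. (1 / real p) ^ a) \<le> 2 * ln (real p) / real p ^ 2"
      by (simp add: mult.commute)
  qed
  finally show ?thesis unfolding P_def by simp
qed

lemma sum_higher_power_mangoldt_div_bounded:
  "\<exists>C. \<forall>N. (\<Sum>d=1..N. higher_power_mangoldt d / real d) \<le> C"
proof (intro exI allI)
  fix N
  have summable: "summable (\<lambda>n. real n powr (-3/2))" by (simp add: summable_real_powr_iff)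
  have "(\<Sum>d=1..N. higher_power_mangoldt d / real d) \<le> (\<Sum>p | prime p \<and> p \<le> N. 2 * ln (real p) / real p ^ 2)"
    by (rule sum_higher_power_mangoldt_div_le)
  also have "\<dots> \<le> (\<Sum>n\<in>{p. prime p \<and> p \<le> N}. 4 * real n powr (-3/2))"
  proof (rule sum_mono)
    fix p assume "p \<in> {p. prime p \<and> p \<le> N}"
    then have "0 < real p" by (simp add: prime_gt_0_nat)
    from ln_div_square_le[OF this]
    show "2 * ln (real p) / real p ^ 2 \<le> 4 * real p powr (-3/2)" by simp
  qed
  also have "\<dots> \<le> 4 * (\<Sum>n. real n powr (-3/2))"
    unfolding sum_distrib_left[symmetric] by (intro mult_left_mono sum_le_suminf summable) auto
  finally show "(\<Sum>d=1..N. higher_power_mangoldt d / real d) \<le> 4 * (\<Sum>n. real n powr (-3/2))" .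
qed

definition simple_prime_above :: "real \<Rightarrow> nat \<Rightarrow> bool" where
  "simple_prime_above k m \<longleftrightarrow> (\<exists>p. prime p \<and> real p > k \<and> multiplicity p m = 1)"

lemma sum_large_prime_ln_le_sum_higher_power_mangoldt:
  assumes "0 < m" "\<not> simple_prime_above k m"
  shows "(\<Sum>d | d dvd m. large_prime_ln k d) \<le> (\<Sum>d | d dvd m. higher_power_mangoldt d)"
proof -
  define P where "P = {p. p dvd m \<and> prime p \<and> real p > k}"
  have fin: "finite {d. d dvd m}" using assms(1) by simp
  have square_dvd: "p\<^sup>2 dvd m" if "p \<in> P" for p
  proof -
    have "0 < multiplicity p m" "multiplicity p m \<noteq> 1"
      using that assms by (auto simp: P_def simple_prime_above_def prime_multiplicity_gt_zero_iff)
    then show ?thesis by (intro multiplicity_dvd') simp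
  qed
  have "(\<Sum>d | d dvd m. large_prime_ln k d) = (\<Sum>p\<in>P. large_prime_ln k p)"
    by (rule sum.mono_neutral_right[OF fin]) (auto simp: P_def large_prime_ln_def)
  also have "\<dots> = (\<Sum>p\<in>P. higher_power_mangoldt (p\<^sup>2))"
    by (intro sum.cong refl) (simp add: P_def large_prime_ln_def higher_power_mangoldt_prime_power)
  also have "\<dots> = (\<Sum>d\<in>power2 ` P. higher_power_mangoldt d)"
    by (rule sum.reindex_cong[symmetric]) (auto simp: inj_on_def power2_eq_iff)
  also have "\<dots> \<le> (\<Sum>d | d dvd m. higher_power_mangoldt d)"
    by (rule sum_mono2[OF fin]) (auto simp: square_dvd higher_power_mangoldt_nonneg)
  finally show ?thesis .
qed

lemma ln_le_sum_divisors_if_not_simple_prime_above: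
  assumes "0 < m" "\<not> simple_prime_above k m"
  shows "ln (real m) \<le> (\<Sum>d | d dvd m. small_prime_ln k d + 2 * higher_power_mangoldt d)"
proof -
  have "ln (real m) = (\<Sum>d | d dvd m. (mangoldt d :: real))" using assms(1) by (simp add: mangoldt_sum)
  also have "\<dots> = (\<Sum>d | d dvd m. small_prime_ln k d) + (\<Sum>d | d dvd m. large_prime_ln k d)
      + (\<Sum>d | d dvd m. higher_power_mangoldt d)"
    by (simp add: mangoldt_eq_small_large_higher_power[of _ k] sum.distrib)
  also have "\<dots> \<le> (\<Sum>d | d dvd m. small_prime_ln k d) + 2 * (\<Sum>d | d dvd m. higher_power_mangoldt d)"
    using sum_large_prime_ln_le_sum_higher_power_mangoldt[OF assms] by simp
  also have "\<dots> = (\<Sum>d | d dvd m. small_prime_ln k d + 2 * higher_power_mangoldt d)"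
    by (simp add: sum.distrib sum_distrib_left)
  finally show ?thesis .
qed

lemma sum_ln_not_simple_prime_above_le:
  assumes "1 \<le> k"
  shows "(\<Sum>m \<in> {m \<in> {1..N}. \<not> simple_prime_above k m}. ln (real m))
    \<le> real N * (2 * ln k + 2 * (\<Sum>d=1..N. higher_power_mangoldt d / real d))"
proof -
  define F where "F d = small_prime_ln k d + 2 * higher_power_mangoldt d" for d
  have F_nonneg: "0 \<le> F d" for d
    unfolding F_def using small_prime_ln_nonneg higher_power_mangoldt_nonneg by (simp add: add_nonneg_nonneg)
  have "(\<Sum>m \<in> {m \<in> {1..N}. \<not> simple_prime_above k m}. ln (real m))
      \<le> (\<Sum>m \<in> {m \<in> {1..N}. \<not> simple_prime_above k m}. \<Sum>d | d dvd m. F d)"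
    unfolding F_def by (intro sum_mono ln_le_sum_divisors_if_not_simple_prime_above) auto
  also have "\<dots> \<le> (\<Sum>m=1..N. \<Sum>d | d dvd m. F d)"
    by (rule sum_mono2) (auto simp: F_nonneg intro: sum_nonneg)
  also have "\<dots> = (\<Sum>d=1..N. F d * real (N div d))" by (rule sum_sum_divisors_eq)
  also have "\<dots> \<le> (\<Sum>d=1..N. F d * (real N / real d))"
    by (intro sum_mono mult_left_mono of_nat_div_le_of_nat F_nonneg)
  also have "\<dots> = real N * ((\<Sum>d=1..N. small_prime_ln k d / real d)
      + 2 * (\<Sum>d=1..N. higher_power_mangoldt d / real d))"
    by (simp add: F_def sum_distrib_left sum.distrib algebra_simps)
  also have "\<dots> \<le> real N * (2 * ln k + 2 * (\<Sum>d=1..N. higher_power_mangoldt d / real d))"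
    using sum_small_prime_ln_div_le[of k N] assms by (intro mult_left_mono) auto
  finally show ?thesis .
qed

lemma card_not_simple_prime_above_le:
  assumes "2 \<le> N" "1 \<le> k"
  shows "real (card {m \<in> {1..N}. \<not> simple_prime_above k m})
    \<le> real N * (2 + 4 * ln k + 4 * (\<Sum>d=1..N. higher_power_mangoldt d / real d)) / ln (real N)"
proof -
  define B where "B = {m \<in> {1..N}. \<not> simple_prime_above k m}"
  define S where "S = (\<Sum>d=1..N. higher_power_mangoldt d / real d)"
  have ln_N: "0 < ln (real N)" using assms(1) by simp
  have "real (card B) \<le> sqrt (real N) + 2 * (\<Sum>m\<in>B. ln (real m)) / ln (real N)"
    using assms(1) by (intro card_le_sqrt_add_sum_ln) (auto simp: B_def)
  also have "\<dots> \<le> 2 * real N / ln (real N) + 2 * (real N * (2 * ln k + 2 * S)) / ln (real N)"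
    using sqrt_le_two_mult_div_ln[of "real N"] sum_ln_not_simple_prime_above_le[OF assms(2), of N]
      assms(1) ln_N
    by (intro add_mono divide_right_mono mult_left_mono) (auto simp: B_def S_def)
  also have "\<dots> = real N * (2 + 4 * ln k + 4 * S) / ln (real N)"
    by (simp only: add_divide_distrib[symmetric]) (simp add: algebra_simps)
  finally show ?thesis by (simp add: B_def S_def)
qed

lemma density_not_simple_prime_above_le:
  "\<exists>A\<ge>0. \<forall>N k. 2 \<le> N \<longrightarrow> 2 \<le> k \<longrightarrow>
     real (card {m \<in> {1..N}. \<not> simple_prime_above k m}) / real N \<le> A * ln k / ln (real N)"
proof -
  obtain C where C: "\<And>N. (\<Sum>d=1..N. higher_power_mangoldt d / real d) \<le> C"
    using sum_higher_power_mangoldt_div_bounded by blast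
  have "0 \<le> C" using C[of 0] by simp
  define A where "A = (2 + 4 * C) / ln 2 + 4"
  have "real (card {m \<in> {1..N}. \<not> simple_prime_above k m}) / real N \<le> A * ln k / ln (real N)"
    if N: "2 \<le> N" and k: "2 \<le> k" for N k
  proof -
    have "2 + 4 * C = (2 + 4 * C) / ln 2 * ln 2" by simp
    also have "\<dots> \<le> (2 + 4 * C) / ln 2 * ln k"
      using \<open>0 \<le> C\<close> k by (intro mult_left_mono) auto
    finally have "2 + 4 * ln k + 4 * (\<Sum>d=1..N. higher_power_mangoldt d / real d) \<le> A * ln k"
      using C[of N] by (simp add: A_def distrib_right)
    then have "real N * (2 + 4 * ln k + 4 * (\<Sum>d=1..N. higher_power_mangoldt d / real d)) / ln (real N)
        \<le> real N * (A * ln k) / ln (real N)"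
      using N by (intro divide_right_mono mult_left_mono) auto
    with card_not_simple_prime_above_le[OF N, of k] k
    have "real (card {m \<in> {1..N}. \<not> simple_prime_above k m}) \<le> real N * (A * ln k) / ln (real N)"
      by simp
    then show ?thesis using N by (simp add: field_simps)
  qed
  moreover have "0 \<le> A" using \<open>0 \<le> C\<close> by (simp add: A_def)
  ultimately show ?thesis by blast
qed

lemma one_minus_prob_large_simple_prime:
  assumes "1 \<le> x"
  shows "1 - prob_large_simple_prime x k
    = real (card {m \<in> {1..nat \<lfloor>x\<rfloor>}. \<not> simple_prime_above k m}) / real (nat \<lfloor>x\<rfloor>)"
proof -
  define N where "N = nat \<lfloor>x\<rfloor>"
  have "1 \<le> N" using assms by (simp add: N_def le_nat_floor)
  have "card {m \<in> {1..N}. simple_prime_above k m} + card {m \<in> {1..N}. \<not> simple_prime_above k m}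
      = card ({m \<in> {1..N}. simple_prime_above k m} \<union> {m \<in> {1..N}. \<not> simple_prime_above k m})"
    by (rule card_Un_disjoint[symmetric]) auto
  also have "{m \<in> {1..N}. simple_prime_above k m} \<union> {m \<in> {1..N}. \<not> simple_prime_above k m} = {1..N}"
    by auto
  finally have "card {m \<in> {1..N}. simple_prime_above k m} + card {m \<in> {1..N}. \<not> simple_prime_above k m} = N"
    by simp
  then show ?thesis
    using \<open>1 \<le> N\<close> unfolding prob_large_simple_prime_def simple_prime_above_def N_def [symmetric]
    by (simp add: field_simps flip: of_nat_add)
qed

theorem proposition4p2:
  shows "\<exists>C::real. \<forall>x k::real. x \<ge> 2 \<longrightarrow> k \<ge> 2 \<longrightarrow>
           \<bar>prob_large_simple_prime x k - 1\<bar> \<le> C * (ln k / ln x + 1 / k)"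
proof -
  obtain A where "0 \<le> A" and A: "\<And>N k. 2 \<le> N \<Longrightarrow> 2 \<le> k \<Longrightarrow>
      real (card {m \<in> {1..N}. \<not> simple_prime_above k m}) / real N \<le> A * ln k / ln (real N)"
    using density_not_simple_prime_above_le by blast
  have "\<bar>prob_large_simple_prime x k - 1\<bar> \<le> 2 * A * (ln k / ln x + 1 / k)"
    if x: "2 \<le> x" and k: "2 \<le> k" for x k :: real
  proof -
    define N where "N = nat \<lfloor>x\<rfloor>"
    have "2 \<le> N" using x by (simp add: N_def le_nat_floor)
    have "\<bar>prob_large_simple_prime x k - 1\<bar>
        = real (card {m \<in> {1..N}. \<not> simple_prime_above k m}) / real N"
      using one_minus_prob_large_simple_prime[of x k] x by (simp add: N_def abs_minus_commute)
    also have "\<dots> \<le> A * ln k / ln (real N)" using A[OF \<open>2 \<le> N\<close> k] .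
    also have "\<dots> \<le> A * ln k / (ln x / 2)"
      using ln_le_two_ln_nat_floor[OF x] x k \<open>0 \<le> A\<close>
      by (intro divide_left_mono mult_nonneg_nonneg) (auto simp: N_def)
    also have "\<dots> \<le> 2 * A * (ln k / ln x + 1 / k)"
      using k \<open>0 \<le> A\<close> by (simp add: field_simps)
    finally show ?thesis .
  qed
  then show ?thesis by blast
qed

end
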